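(* Let $n\ge 4$ and let $\sigma$ be a maximal simplex of $\Delta_n$. Then $\dim(\sigma)\in\{7,\,n+3,\,2n-1\}$. Moreover, if $\dim(\sigma)\neq 7$, then either $\sigma=N(v)\cup N(w)$ for some adjacent vertices $v,w$ of $\mathbb{I}_n$, or $\sigma=N(u)\cup K_u^{i,j,k}$ for some vertex $u$ and distinct $i,j,k\in[n]$.
   Context: $\mathbb{I}_n$ is the $n$-dimensional hypercube graph on vertex set $\{0,1\}^n$ (adjacent iff differing in exactly one coordinate), with Hamming distance $d(v,w)=\#\{i: v(i)\ne w(i)\}$. $\Delta_n=\mathcal{VR}(\mathbb{I}_n;3)$ is the simplicial complex whose simplices are the subsets $\sigma\subseteq\{0,1\}^n$ with $d(x,y)\le 3$ for all $x,y\in\sigma$; $\dim\sigma=|\sigma|-1$. $[n]=\{1,\dots,n\}$. For a vertex $u$ and distinct $i_1,\dots,i_k$, $u^{i_1,\dots,i_k}$ is $u$ with exactly coordinates $i_1,\dots,i_k$ changed. $N(u)=\{u^i:i\in[n]\}$. For distinct $i,j,k$, $K_u^{i,j,k}=\{u,u^{i,j},u^{j,k},u^{i,k}\}$. *)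

theory Defs
  imports Main "HOL-Library.FuncSet"
begin

text \<open>Vertices of the hypercube I_n: functions [n] -> {0,1}, encoded as extensional
  functions from {1..n} to bool.\<close>
definition hcube :: "nat \<Rightarrow> (nat \<Rightarrow> bool) set" where
  "hcube n = {1..n} \<rightarrow>\<^sub>E (UNIV :: bool set)"

definition hdist :: "nat \<Rightarrow> (nat \<Rightarrow> bool) \<Rightarrow> (nat \<Rightarrow> bool) \<Rightarrow> nat" where
  "hdist n v w = card {i \<in> {1..n}. v i \<noteq> w i}"

definition hadj :: "nat \<Rightarrow> (nat \<Rightarrow> bool) \<Rightarrow> (nat \<Rightarrow> bool) \<Rightarrow> bool" where
  "hadj n v w \<longleftrightarrow> v \<in> hcube n \<and> w \<in> hcube n \<and> hdist n v w = 1"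

definition flip :: "(nat \<Rightarrow> bool) \<Rightarrow> nat set \<Rightarrow> (nat \<Rightarrow> bool)" where
  "flip u I = (\<lambda>i. if i \<in> I then \<not> u i else u i)"

definition nbhd :: "nat \<Rightarrow> (nat \<Rightarrow> bool) \<Rightarrow> (nat \<Rightarrow> bool) set" where
  "nbhd n u = {flip u {i} | i. i \<in> {1..n}}"

definition Kset :: "(nat \<Rightarrow> bool) \<Rightarrow> nat \<Rightarrow> nat \<Rightarrow> nat \<Rightarrow> (nat \<Rightarrow> bool) set" where
  "Kset u i j k = {u, flip u {i, j}, flip u {j, k}, flip u {i, k}}"

text \<open>Simplices of Delta_n = VR(I_n; 3): nonempty vertex sets of pairwise distance at most 3.\<close>
definition simplices :: "nat \<Rightarrow> (nat \<Rightarrow> bool) set set" where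
  "simplices n = {\<sigma>. \<sigma> \<noteq> {} \<and> \<sigma> \<subseteq> hcube n \<and> (\<forall>x\<in>\<sigma>. \<forall>y\<in>\<sigma>. hdist n x y \<le> 3)}"

definition maximal_simplex :: "nat \<Rightarrow> (nat \<Rightarrow> bool) set \<Rightarrow> bool" where
  "maximal_simplex n \<sigma> \<longleftrightarrow> \<sigma> \<in> simplices n \<and> (\<forall>\<tau>\<in>simplices n. \<sigma> \<subseteq> \<tau> \<longrightarrow> \<tau> = \<sigma>)"

definition sdim :: "(nat \<Rightarrow> bool) set \<Rightarrow> int" where
  "sdim \<sigma> = int (card \<sigma>) - 1"

end

theory Submission
  imports Defs
begin

text \<open>
  Record every vertex of \<sigma> by the set of coordinates in which it differs from a fixed vertex
  of \<sigma>. Hamming distance becomes the size of the symmetric difference, and \<sigma> becomes a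
  maximal family F of subsets of [n] with pairwise symmetric differences of size at most 3.
  Inside one parity class of F all distances are exactly 2, which forces the class into the
  neighbourhood N(C) of a single set or into a configuration K. By maximality such a class has
  at most 4 members unless its centre C lies in F; then the other class is contained in N(D)
  for some D adjacent to C or in a K centred at C, and F equals N(C) \<union> N(D) (2n members) or
  N(C) \<union> K (n + 4 members). Otherwise |F| \<le> 8, while the subcube spanned by two members at
  distance 3 shows |F| \<ge> 8.
\<close>

lemma sym_diff_cancel_left [simp]: "sym_diff A (sym_diff A B) = B"
  by blast

lemma sym_diff_sym_diff_same_left [simp]: "sym_diff (sym_diff X A) (sym_diff X B) = sym_diff A B"
  by blast

lemma card_sym_diff_le_add:
  assumes "finite A" "finite B"
  shows "card (sym_diff A B) \<le> card A + card B"
proof -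
  have "card (sym_diff A B) \<le> card (A \<union> B)"
    by (rule card_mono) (use assms in auto)
  also have "\<dots> \<le> card A + card B" by (rule card_Un_le)
  finally show ?thesis .
qed

lemma card_sym_diff_triangle:
  assumes "finite A" "finite B" "finite C"
  shows "card (sym_diff A B) \<le> card (sym_diff A C) + card (sym_diff C B)"
proof -
  have "card (sym_diff A B) \<le> card (sym_diff A C \<union> sym_diff C B)"
    by (rule card_mono) (use assms in auto)
  also have "\<dots> \<le> card (sym_diff A C) + card (sym_diff C B)" by (rule card_Un_le)
  finally show ?thesis .
qed

lemma card_sym_diff_add_card_Int:
  assumes "finite A" "finite B"
  shows "card (sym_diff A B) + 2 * card (A \<inter> B) = card A + card B"
proof -
  have "card (sym_diff A B) = card (A - B) + card (B - A)"
    by (rule card_Un_disjoint) (use assms in auto)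
  moreover have "card A = card (A \<inter> B) + card (A - B)" "card B = card (B \<inter> A) + card (B - A)"
    using assms by (simp_all add: card_Int_Diff)
  ultimately show ?thesis by (simp add: Int_commute)
qed

lemma even_card_sym_diff_iff:
  assumes "finite A" "finite B"
  shows "even (card (sym_diff A B)) \<longleftrightarrow> (even (card A) \<longleftrightarrow> even (card B))"
  using card_sym_diff_add_card_Int[OF assms] by presburger

lemma even_card_sym_diff_singleton_iff:
  "finite A \<Longrightarrow> even (card (sym_diff A {i})) \<longleftrightarrow> odd (card A)"
  using even_card_sym_diff_iff[of A "{i}"] by simp

lemma inj_sym_diff: "inj (\<lambda>B. sym_diff A B)"
  by (rule injI) blast

definition maximal_family :: "nat \<Rightarrow> nat set set \<Rightarrow> bool" where
  "maximal_family n F \<longleftrightarrow> F \<subseteq> Pow {1..n} \<and> (\<forall>A\<in>F. \<forall>B\<in>F. card (sym_diff A B) \<le> 3) \<and>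
     (\<forall>A. A \<subseteq> {1..n} \<longrightarrow> (\<forall>B\<in>F. card (sym_diff A B) \<le> 3) \<longrightarrow> A \<in> F)"

lemma maximal_familyD:
  assumes "maximal_family n F"
  shows "F \<subseteq> Pow {1..n}"
    and "\<And>A B. A \<in> F \<Longrightarrow> B \<in> F \<Longrightarrow> card (sym_diff A B) \<le> 3"
    and "\<And>A. A \<subseteq> {1..n} \<Longrightarrow> (\<And>B. B \<in> F \<Longrightarrow> card (sym_diff A B) \<le> 3) \<Longrightarrow> A \<in> F"
  using assms unfolding maximal_family_def by blast+

lemma maximal_family_finite_member: "maximal_family n F \<Longrightarrow> A \<in> F \<Longrightarrow> finite A"
  using maximal_familyD(1) finite_subset by (metis PowD finite_atLeastAtMost subsetD)

lemma maximal_family_finite: "maximal_family n F \<Longrightarrow> finite F"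
  using maximal_familyD(1) by (metis finite_Pow_iff finite_atLeastAtMost finite_subset)

lemma maximal_family_eqI:
  assumes "maximal_family n F" "F \<subseteq> G" "G \<subseteq> Pow {1..n}"
    and "\<And>A B. A \<in> G \<Longrightarrow> B \<in> G \<Longrightarrow> card (sym_diff A B) \<le> 3"
  shows "F = G"
proof (rule subset_antisym)
  show "G \<subseteq> F"
  proof
    fix A assume A: "A \<in> G"
    show "A \<in> F"
    proof (rule maximal_familyD(3)[OF assms(1)])
      show "A \<subseteq> {1..n}" using A assms(3) by blast
      show "card (sym_diff A B) \<le> 3" if "B \<in> F" for B
        by (rule assms(4)[OF A]) (use that assms(2) in blast)
    qed
  qed
qed (rule assms(2))

lemma maximal_family_translate:
  assumes mf: "maximal_family n F" and X: "X \<subseteq> {1..n}"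
  shows "maximal_family n ((\<lambda>A. sym_diff X A) ` F)"
  unfolding maximal_family_def
proof (intro conjI allI impI ballI)
  show "(\<lambda>A. sym_diff X A) ` F \<subseteq> Pow {1..n}"
    using maximal_familyD(1)[OF mf] X by blast
next
  fix A B assume "A \<in> (\<lambda>A. sym_diff X A) ` F" "B \<in> (\<lambda>A. sym_diff X A) ` F"
  then show "card (sym_diff A B) \<le> 3"
    using maximal_familyD(2)[OF mf] by auto
next
  fix A assume A: "A \<subseteq> {1..n}" and near: "\<forall>B\<in>(\<lambda>A. sym_diff X A) ` F. card (sym_diff A B) \<le> 3"
  have "sym_diff X A \<in> F"
  proof (rule maximal_familyD(3)[OF mf])
    show "sym_diff X A \<subseteq> {1..n}" using X A by blast
  next
    fix B assume "B \<in> F"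
    then have "card (sym_diff A (sym_diff X B)) \<le> 3" using near by blast
    moreover have "sym_diff (sym_diff X A) B = sym_diff A (sym_diff X B)" by blast
    ultimately show "card (sym_diff (sym_diff X A) B) \<le> 3" by simp
  qed
  then show "A \<in> (\<lambda>A. sym_diff X A) ` F"
    by (rule image_eqI[rotated]) blast
qed

lemma maximal_family_has_distance_3:
  assumes mf: "maximal_family n F" and n: "3 \<le> n"
  obtains A B where "A \<in> F" "B \<in> F" "card (sym_diff A B) = 3"
proof -
  have "\<exists>A\<in>F. \<exists>B\<in>F. card (sym_diff A B) = 3"
  proof (rule ccontr)
    assume "\<not> ?thesis"
    then have le2: "card (sym_diff A B) \<le> 2" if "A \<in> F" "B \<in> F" for A B
      using maximal_familyD(2)[OF mf that] that by fastforce
    have flip_closed: "sym_diff A {i} \<in> F" if "A \<in> F" "i \<in> {1..n}" for A i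
    proof (rule maximal_familyD(3)[OF mf])
      show "sym_diff A {i} \<subseteq> {1..n}"
        using maximal_familyD(1)[OF mf] that by blast
    next
      fix B assume B: "B \<in> F"
      have "card (sym_diff (sym_diff A {i}) B) \<le> card (sym_diff (sym_diff A {i}) A) + card (sym_diff A B)"
        using maximal_family_finite_member[OF mf] that B by (intro card_sym_diff_triangle) auto
      also have "sym_diff (sym_diff A {i}) A = {i}" by blast
      finally show "card (sym_diff (sym_diff A {i}) B) \<le> 3"
        using le2[OF that(1) B] by simp
    qed
    have "F \<noteq> {}"
      using maximal_familyD(3)[OF mf, of "{}"] by auto
    then obtain A where A: "A \<in> F" by blast
    moreover have "(1::nat) \<in> {1..n}" "(2::nat) \<in> {1..n}" "(3::nat) \<in> {1..n}"
      using n by auto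
    ultimately have "sym_diff (sym_diff (sym_diff A {1}) {2}) {3} \<in> F"
      by (intro flip_closed)
    then have "card (sym_diff A (sym_diff (sym_diff (sym_diff A {1}) {2}) {3})) \<le> 2"
      by (rule le2[OF A])
    moreover have "sym_diff A (sym_diff (sym_diff (sym_diff A {1}) {2}) {3}) = {1, 2, 3}"
      by auto
    ultimately show False by (simp add: eval_nat_numeral)
  qed
  then show ?thesis using that by blast
qed

lemma maximal_family_cube_witness:
  assumes mf: "maximal_family n F" and empty: "{} \<in> F" and T: "T \<in> F" "card T = 3"
    and W: "W \<subseteq> T" "W \<notin> F"
  obtains B where "B \<in> F" "\<not> B \<subseteq> T" "T - B = W"
proof -
  have finT: "finite T" using T(2) by (intro card_ge_0_finite) simp
  have "T \<subseteq> {1..n}" using maximal_familyD(1)[OF mf] T(1) by blast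
  then obtain B where B: "B \<in> F" and far: "\<not> card (sym_diff W B) \<le> 3"
    using maximal_familyD(3)[OF mf, of W] W by blast
  define S R where "S = B \<inter> T" and "R = B - T"
  have finB: "finite B" by (rule maximal_family_finite_member[OF mf B])
  then have finSR: "finite S" "finite R" by (simp_all add: S_def R_def)
  have "card B = card S + card R"
    unfolding S_def R_def using finB card_Int_Diff by blast
  moreover have "card (sym_diff B T) = (3 - card S) + card R"
  proof -
    have "sym_diff B T = (T - S) \<union> R" by (auto simp: S_def R_def)
    moreover have "card (T - S) = 3 - card S"
      using card_Diff_subset[of S T] finSR(1) T(2) by (simp add: S_def)
    moreover have "(T - S) \<inter> R = {}" by (auto simp: S_def R_def)
    ultimately show ?thesis using finT finSR by (simp add: card_Un_disjoint)
  qed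
  moreover have "card (sym_diff B {}) \<le> 3" by (rule maximal_familyD(2)[OF mf B empty])
  moreover have "card (sym_diff B T) \<le> 3" by (rule maximal_familyD(2)[OF mf B T(1)])
  moreover have "card S \<le> 3" using card_mono[OF finT, of S] T(2) by (simp add: S_def)
  ultimately have R_le_1: "card R \<le> 1" by simp
  have "sym_diff W B = sym_diff W S \<union> R" using W(1) by (auto simp: S_def R_def)
  then have "card (sym_diff W B) \<le> card (sym_diff W S) + card R" by (simp add: card_Un_le)
  moreover have WS_T: "sym_diff W S \<subseteq> T" using W(1) by (auto simp: S_def)
  moreover have "card (sym_diff W S) \<le> 3" using card_mono[OF finT WS_T] T(2) by simp
  ultimately have "card R = 1" "card (sym_diff W S) = 3" using far R_le_1 by linarith+
  then have "R \<noteq> {}" "sym_diff W S = T"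
    using card_subset_eq[OF finT WS_T] T(2) by auto
  then show ?thesis
    using that B W(1) by (auto simp: S_def R_def)
qed

lemma card_maximal_family_ge_8_at_empty:
  assumes mf: "maximal_family n F" and empty: "{} \<in> F" and T: "T \<in> F" "card T = 3"
  shows "8 \<le> card F"
proof -
  define g where "g B = (if B \<subseteq> T then B else T - B)" for B
  have "Pow T \<subseteq> g ` F"
  proof
    fix W assume W: "W \<in> Pow T"
    show "W \<in> g ` F"
    proof (cases "W \<in> F")
      case True
      then show ?thesis using W by (auto simp: g_def intro!: image_eqI[of _ _ W])
    next
      case False
      then obtain B where "B \<in> F" "\<not> B \<subseteq> T" "T - B = W"
        using maximal_family_cube_witness[OF mf empty T] W by blast
      then show ?thesis by (auto simp: g_def intro!: image_eqI[of _ _ B])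
    qed
  qed
  then have "card (Pow T) \<le> card (g ` F)"
    by (rule card_mono[rotated]) (simp add: maximal_family_finite[OF mf])
  also have "\<dots> \<le> card F"
    by (rule card_image_le[OF maximal_family_finite[OF mf]])
  finally have "card (Pow T) \<le> card F" .
  moreover have "finite T" using T(2) by (intro card_ge_0_finite) simp
  ultimately show ?thesis
    using T(2) by (simp add: card_Pow)
qed

lemma card_maximal_family_ge_8:
  assumes mf: "maximal_family n F" and n: "3 \<le> n"
  shows "8 \<le> card F"
proof -
  obtain A B where AB: "A \<in> F" "B \<in> F" "card (sym_diff A B) = 3"
    using maximal_family_has_distance_3[OF mf n] .
  let ?G = "(\<lambda>C. sym_diff A C) ` F"
  have "A \<subseteq> {1..n}" using maximal_familyD(1)[OF mf] AB(1) by blast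
  then have "maximal_family n ?G" by (rule maximal_family_translate[OF mf])
  moreover have "{} \<in> ?G" using AB(1) by (rule image_eqI[rotated]) blast
  moreover have "sym_diff A B \<in> ?G" using AB(2) by (rule imageI)
  ultimately have "8 \<le> card ?G" using AB(3) by (rule card_maximal_family_ge_8_at_empty)
  also have "card ?G = card F"
    by (rule card_image[OF inj_on_subset[OF inj_sym_diff subset_UNIV]])
  finally show ?thesis .
qed

definition nbhd_family :: "nat \<Rightarrow> nat set \<Rightarrow> nat set set" where
  "nbhd_family n C = (\<lambda>i. sym_diff C {i}) ` {1..n}"

definition K_family :: "nat set \<Rightarrow> nat \<Rightarrow> nat \<Rightarrow> nat \<Rightarrow> nat set set" where
  "K_family U i j k = {U, sym_diff U {i, j}, sym_diff U {j, k}, sym_diff U {i, k}}"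

lemma nbhd_familyE:
  assumes "A \<in> nbhd_family n C"
  obtains i where "i \<in> {1..n}" "A = sym_diff C {i}"
  using assms unfolding nbhd_family_def by blast

lemma card_2_obtain_other:
  assumes "card P = 2" "j \<in> P"
  obtains k where "k \<noteq> j" "P = {j, k}"
proof -
  obtain x y where P: "P = {x, y}" "x \<noteq> y"
    using assms(1) by (auto simp: card_2_iff)
  show thesis
  proof (cases "j = x")
    case True
    then show ?thesis using that[of y] P by simp
  next
    case False
    then have "j = y" using assms(2) P(1) by simp
    then show ?thesis using that[of x] P False by (simp add: insert_commute)
  qed
qed

lemma pair_meeting_triangle:
  assumes "card Q = 2" "i \<noteq> j" "j \<noteq> k" "i \<noteq> k"
    and "Q \<inter> {i, j} \<noteq> {}" "Q \<inter> {j, k} \<noteq> {}" "Q \<inter> {i, k} \<noteq> {}"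
  shows "Q \<in> {{i, j}, {j, k}, {i, k}}"
proof -
  obtain x y where Q: "Q = {x, y}" "x \<noteq> y"
    using assms(1) by (auto simp: card_2_iff)
  show ?thesis
    using assms(2-) Q(2) unfolding Q(1) by (simp add: doubleton_eq_iff) blast
qed

lemma intersecting_pairs_star_or_triangle:
  assumes two: "\<And>P. P \<in> PP \<Longrightarrow> card P = 2"
    and meet: "\<And>P Q. P \<in> PP \<Longrightarrow> Q \<in> PP \<Longrightarrow> P \<inter> Q \<noteq> {}"
    and "P1 \<in> PP"
  shows "(\<exists>i. \<forall>P\<in>PP. i \<in> P) \<or>
    (\<exists>i j k. i \<noteq> j \<and> j \<noteq> k \<and> i \<noteq> k \<and> PP = {{i, j}, {j, k}, {i, k}})"
proof -
  obtain i j where P1: "P1 = {i, j}" "i \<noteq> j"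
    using two[OF \<open>P1 \<in> PP\<close>] by (auto simp: card_2_iff)
  show ?thesis
  proof (cases "(\<forall>P\<in>PP. i \<in> P) \<or> (\<forall>P\<in>PP. j \<in> P)")
    case True
    then show ?thesis by blast
  next
    case False
    then obtain P2 P3 where P2: "P2 \<in> PP" "i \<notin> P2" and P3: "P3 \<in> PP" "j \<notin> P3"
      by blast
    have "j \<in> P2" using meet[OF \<open>P1 \<in> PP\<close> P2(1)] P1 P2(2) by auto
    then obtain k where k: "k \<noteq> j" "P2 = {j, k}"
      by (rule card_2_obtain_other[OF two[OF P2(1)]])
    have "k \<noteq> i" using k P2(2) by auto
    have "i \<in> P3" using meet[OF \<open>P1 \<in> PP\<close> P3(1)] P1 P3(2) by auto
    moreover have "k \<in> P3" using meet[OF P2(1) P3(1)] k P3(2) by auto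
    moreover obtain l where "P3 = {i, l}"
      using card_2_obtain_other[OF two[OF P3(1)] \<open>i \<in> P3\<close>] by blast
    ultimately have P3_eq: "P3 = {i, k}"
      using \<open>k \<noteq> i\<close> by auto
    have "PP \<subseteq> {{i, j}, {j, k}, {i, k}}"
    proof
      fix Q assume Q: "Q \<in> PP"
      show "Q \<in> {{i, j}, {j, k}, {i, k}}"
        using pair_meeting_triangle[OF two[OF Q] P1(2) k(1)[symmetric] \<open>k \<noteq> i\<close>[symmetric]]
          meet[OF Q \<open>P1 \<in> PP\<close>] meet[OF Q P2(1)] meet[OF Q P3(1)] P1(1) k(2) P3_eq
        by simp
    qed
    moreover have "{{i, j}, {j, k}, {i, k}} \<subseteq> PP"
      using \<open>P1 \<in> PP\<close> P1(1) P2(1) k(2) P3(1) P3_eq by blast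
    ultimately show ?thesis using P1(2) k(1) \<open>k \<noteq> i\<close> by blast
  qed
qed

lemma subset_nbhd_if_differences_contain:
  assumes two: "\<And>B. B \<in> X \<Longrightarrow> B \<noteq> A0 \<Longrightarrow> card (sym_diff A0 B) = 2"
    and contain: "\<And>B. B \<in> X \<Longrightarrow> B \<noteq> A0 \<Longrightarrow> i \<in> sym_diff A0 B"
    and X: "X \<subseteq> Pow {1..n}" and A0: "A0 \<subseteq> {1..n}" and i: "i \<in> {1..n}"
  shows "X \<subseteq> nbhd_family n (sym_diff A0 {i})"
proof
  fix B assume B: "B \<in> X"
  show "B \<in> nbhd_family n (sym_diff A0 {i})"
  proof (cases "B = A0")
    case True
    then have "B = sym_diff (sym_diff A0 {i}) {i}" by blast
    then show ?thesis using i unfolding nbhd_family_def by blast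
  next
    case False
    obtain m where m: "m \<noteq> i" "sym_diff A0 B = {i, m}"
      by (rule card_2_obtain_other[OF two[OF B False] contain[OF B False]])
    have "m \<in> {1..n}" using m(2) B X A0 by blast
    moreover have "B = sym_diff A0 (sym_diff A0 B)" by blast
    then have "B = sym_diff (sym_diff A0 {i}) {m}" using m by auto
    ultimately show ?thesis unfolding nbhd_family_def by blast
  qed
qed

lemma subset_K_if_differences_in_triangle:
  assumes "(\<lambda>B. sym_diff A0 B) ` (X - {A0}) \<subseteq> {{i, j}, {j, k}, {i, k}}"
  shows "X \<subseteq> K_family A0 i j k"
proof
  fix B assume B: "B \<in> X"
  show "B \<in> K_family A0 i j k"
  proof (cases "B = A0")
    case False
    then have "sym_diff A0 B \<in> {{i, j}, {j, k}, {i, k}}" using assms B by blast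
    then have "sym_diff A0 (sym_diff A0 B) \<in> (\<lambda>P. sym_diff A0 P) ` {{i, j}, {j, k}, {i, k}}"
      by (rule imageI)
    then show ?thesis unfolding sym_diff_cancel_left K_family_def by simp
  qed (simp add: K_family_def)
qed

lemma distance_2_differences_meet:
  assumes fin: "\<And>A. A \<in> X \<Longrightarrow> finite A"
    and dist2: "\<And>A B. A \<in> X \<Longrightarrow> B \<in> X \<Longrightarrow> A \<noteq> B \<Longrightarrow> card (sym_diff A B) = 2"
    and A0: "A0 \<in> X" and B: "B \<in> X" "B \<noteq> A0" and B': "B' \<in> X" "B' \<noteq> A0"
  shows "sym_diff A0 B \<inter> sym_diff A0 B' \<noteq> {}"
proof (cases "B = B'")
  case True
  then show ?thesis using dist2[OF A0 B(1)] B(2) by force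
next
  case False
  have "card (sym_diff (sym_diff A0 B) (sym_diff A0 B')) = 2"
    unfolding sym_diff_sym_diff_same_left using dist2[OF B(1) B'(1) False] .
  moreover have "card (sym_diff A0 B) = 2" "card (sym_diff A0 B') = 2"
    using dist2 A0 B B' by auto
  moreover have "finite (sym_diff A0 B)" "finite (sym_diff A0 B')"
    using fin A0 B B' by auto
  ultimately have "card (sym_diff A0 B \<inter> sym_diff A0 B') = 1"
    using card_sym_diff_add_card_Int[of "sym_diff A0 B" "sym_diff A0 B'"] by simp
  then show ?thesis by auto
qed

lemma distance_2_family_in_nbhd_or_K:
  assumes X: "X \<subseteq> Pow {1..n}" and n: "1 \<le> n"
    and dist2: "\<And>A B. A \<in> X \<Longrightarrow> B \<in> X \<Longrightarrow> A \<noteq> B \<Longrightarrow> card (sym_diff A B) = 2"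
  shows "(\<exists>C. C \<subseteq> {1..n} \<and> X \<subseteq> nbhd_family n C) \<or>
    (\<exists>U i j k. U \<subseteq> {1..n} \<and> i \<in> {1..n} \<and> j \<in> {1..n} \<and> k \<in> {1..n} \<and>
       i \<noteq> j \<and> j \<noteq> k \<and> i \<noteq> k \<and> X \<subseteq> K_family U i j k)"
proof (cases "X = {}")
  case True
  then show ?thesis by blast
next
  case False
  then obtain A0 where A0: "A0 \<in> X" by blast
  have A0_sub: "A0 \<subseteq> {1..n}" using A0 X by blast
  show ?thesis
  proof (cases "X \<subseteq> {A0}")
    case True
    have "A0 = sym_diff (sym_diff A0 {1}) {1}" by blast
    then have "A0 \<in> nbhd_family n (sym_diff A0 {1})"
      using n unfolding nbhd_family_def by (intro image_eqI[of _ _ 1]) auto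
    moreover have "sym_diff A0 {1} \<subseteq> {1..n}" using A0_sub n by auto
    ultimately show ?thesis using True by (intro disjI1 exI[of _ "sym_diff A0 {1}"]) blast
  next
    case False
    define PP where "PP = (\<lambda>B. sym_diff A0 B) ` (X - {A0})"
    have fin: "finite A" if "A \<in> X" for A
      using that X by (meson PowD finite_atLeastAtMost finite_subset subsetD)
    have two: "card P = 2" if "P \<in> PP" for P
      using that dist2[OF A0] by (auto simp: PP_def)
    have meet: "P \<inter> Q \<noteq> {}" if "P \<in> PP" "Q \<in> PP" for P Q
      using that distance_2_differences_meet[OF fin dist2 A0] unfolding PP_def by blast
    have PP_sub: "P \<subseteq> {1..n}" if "P \<in> PP" for P
      using that X A0_sub by (auto simp: PP_def)
    obtain P1 where "P1 \<in> PP" using False by (auto simp: PP_def)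
    then have "(\<exists>i. \<forall>P\<in>PP. i \<in> P) \<or>
      (\<exists>i j k. i \<noteq> j \<and> j \<noteq> k \<and> i \<noteq> k \<and> PP = {{i, j}, {j, k}, {i, k}})"
      by (rule intersecting_pairs_star_or_triangle[rotated 2]) (fact two, fact meet)
    then show ?thesis
    proof (elim disjE exE conjE)
      fix i assume i: "\<forall>P\<in>PP. i \<in> P"
      have "i \<in> {1..n}" using i PP_sub \<open>P1 \<in> PP\<close> by blast
      moreover have "X \<subseteq> nbhd_family n (sym_diff A0 {i})"
        using two i \<open>i \<in> {1..n}\<close> unfolding PP_def
        by (intro subset_nbhd_if_differences_contain[OF _ _ X A0_sub]) auto
      moreover have "sym_diff A0 {i} \<subseteq> {1..n}" using A0_sub \<open>i \<in> {1..n}\<close> by blast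
      ultimately show ?thesis by blast
    next
      fix i j k assume ijk: "i \<noteq> j" "j \<noteq> k" "i \<noteq> k" and PP: "PP = {{i, j}, {j, k}, {i, k}}"
      have "i \<in> {1..n}" "j \<in> {1..n}" "k \<in> {1..n}" using PP_sub PP by blast+
      moreover have "X \<subseteq> K_family A0 i j k"
        using PP unfolding PP_def by (intro subset_K_if_differences_in_triangle) simp
      ultimately show ?thesis using A0_sub ijk by blast
    qed
  qed
qed

lemma nbhd_family_subset_Pow: "C \<subseteq> {1..n} \<Longrightarrow> nbhd_family n C \<subseteq> Pow {1..n}"
  unfolding nbhd_family_def by auto

lemma K_family_subset_Pow:
  "U \<subseteq> {1..n} \<Longrightarrow> i \<in> {1..n} \<Longrightarrow> j \<in> {1..n} \<Longrightarrow> k \<in> {1..n} \<Longrightarrow> K_family U i j k \<subseteq> Pow {1..n}"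
  unfolding K_family_def by auto

lemma card_le_4_if_subset_nbhd_of_nonmember:
  assumes mf: "maximal_family n F" and C: "C \<subseteq> {1..n}" "C \<notin> F"
    and P: "P \<subseteq> F" "P \<subseteq> nbhd_family n C"
  shows "card P \<le> 4"
proof (cases "P = {}")
  case True
  then show ?thesis by simp
next
  case False
  then obtain p0 where p0: "p0 \<in> P" by blast
  obtain B where B: "B \<in> F" and far: "\<not> card (sym_diff C B) \<le> 3"
    using maximal_familyD(3)[OF mf C(1)] C(2) by blast
  define D where "D = sym_diff C B"
  have finC: "finite C" using C(1) finite_subset by blast
  have finB: "finite B" by (rule maximal_family_finite_member[OF mf B])
  have finD: "finite D" using finC finB by (simp add: D_def)
  have near: "card (sym_diff p B) \<le> 3" if "p \<in> P" for p
    using maximal_familyD(2)[OF mf _ B] that P(1) by blast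
  obtain i0 where i0: "p0 = sym_diff C {i0}"
    using P(2) p0 by (auto elim: nbhd_familyE)
  have "card D \<le> card (sym_diff C p0) + card (sym_diff p0 B)"
    unfolding D_def using finC finB i0 by (intro card_sym_diff_triangle) auto
  also have "sym_diff C p0 = {i0}" using i0 by blast
  finally have "card D \<le> 4" using near[OF p0] by simp
  have "P \<subseteq> (\<lambda>i. sym_diff C {i}) ` D"
  proof
    fix p assume p: "p \<in> P"
    then obtain i where i: "p = sym_diff C {i}" using P(2) by (auto elim: nbhd_familyE)
    have "sym_diff p B = sym_diff D {i}" unfolding i D_def by blast
    moreover have "card (insert i D) = card D + 1" if "i \<notin> D" using finD that by simp
    moreover have "sym_diff D {i} = insert i D" if "i \<notin> D" using that by blast
    ultimately have "i \<in> D" using near[OF p] far \<open>card D \<le> 4\<close> unfolding D_def by fastforce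
    then show "p \<in> (\<lambda>i. sym_diff C {i}) ` D" using i by blast
  qed
  then have "card P \<le> card ((\<lambda>i. sym_diff C {i}) ` D)"
    using finD by (intro card_mono) auto
  also have "\<dots> \<le> card D" using finD by (rule card_image_le)
  finally show ?thesis using \<open>card D \<le> 4\<close> by simp
qed

lemma K_family_eq_image: "K_family U i j k = (\<lambda>P. sym_diff U P) ` {{}, {i, j}, {j, k}, {i, k}}"
  unfolding K_family_def by simp

lemma K_family_recenter:
  assumes C: "C \<in> K_family U i j k" and ijk: "i \<noteq> j" "j \<noteq> k" "i \<noteq> k"
  shows "K_family C i j k = K_family U i j k"
proof -
  let ?V = "{{}, {i, j}, {j, k}, {i, k}} :: nat set set"
  obtain P0 where P0: "P0 \<in> ?V" "C = sym_diff U P0"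
    using C unfolding K_family_eq_image by blast
  \<comment> \<open>the four difference sets form a group under symmetric difference\<close>
  have Klein: "(\<lambda>Q. sym_diff P0 Q) ` ?V = ?V"
    using P0(1) ijk by (elim insertE; auto)
  have "K_family C i j k = (\<lambda>Q. sym_diff C Q) ` ?V" by (rule K_family_eq_image)
  also have "\<dots> = (\<lambda>R. sym_diff U R) ` ((\<lambda>Q. sym_diff P0 Q) ` ?V)"
    unfolding P0(2) image_image by (intro image_cong) auto
  also have "\<dots> = K_family U i j k" unfolding Klein by (rule K_family_eq_image[symmetric])
  finally show ?thesis .
qed

definition adjacent_nbhds_family :: "nat \<Rightarrow> nat set set \<Rightarrow> bool" where
  "adjacent_nbhds_family n F \<longleftrightarrow> (\<exists>C D. C \<subseteq> {1..n} \<and> D \<subseteq> {1..n} \<and> card (sym_diff C D) = 1 \<and>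
     F = nbhd_family n C \<union> nbhd_family n D)"

definition nbhd_K_family :: "nat \<Rightarrow> nat set set \<Rightarrow> bool" where
  "nbhd_K_family n F \<longleftrightarrow> (\<exists>U i j k. U \<subseteq> {1..n} \<and> i \<in> {1..n} \<and> j \<in> {1..n} \<and> k \<in> {1..n} \<and>
     i \<noteq> j \<and> j \<noteq> k \<and> i \<noteq> k \<and> F = nbhd_family n U \<union> K_family U i j k)"

lemma card_sym_diff_sym_diff_singletons_le:
  assumes "finite C" "finite D"
  shows "card (sym_diff (sym_diff C {a}) (sym_diff D {b})) \<le> card (sym_diff C D) + 2"
proof -
  have "card (sym_diff (sym_diff C {a}) (sym_diff D {b})) \<le> card (sym_diff C D \<union> {a, b})"
    using assms by (intro card_mono) auto
  also have "\<dots> \<le> card (sym_diff C D) + card {a, b}" by (rule card_Un_le)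
  also have "card {a, b} \<le> 2" by (simp add: card_insert_if)
  finally show ?thesis by simp
qed

lemma adjacent_nbhds_distance_le_3:
  assumes fin: "finite C" "finite D" and CD: "card (sym_diff C D) = 1"
    and X: "X \<in> nbhd_family n C \<union> nbhd_family n D" and Y: "Y \<in> nbhd_family n C \<union> nbhd_family n D"
  shows "card (sym_diff X Y) \<le> 3"
proof -
  obtain C' a where C': "C' = C \<or> C' = D" "X = sym_diff C' {a}"
    using X unfolding nbhd_family_def by blast
  obtain D' b where D': "D' = C \<or> D' = D" "Y = sym_diff D' {b}"
    using Y unfolding nbhd_family_def by blast
  have "card (sym_diff D C) = 1" using CD by (simp add: Un_commute)
  then have "card (sym_diff C' D') \<le> 1" using C'(1) D'(1) CD by auto
  moreover have "finite C'" "finite D'" using C'(1) D'(1) fin by auto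
  ultimately show ?thesis
    unfolding C'(2) D'(2) using card_sym_diff_sym_diff_singletons_le[of C' D' a b] by linarith
qed

lemma nbhd_K_distance_le_3:
  assumes fin: "finite U"
    and X: "X \<in> nbhd_family n U \<union> K_family U i j k" and Y: "Y \<in> nbhd_family n U \<union> K_family U i j k"
  shows "card (sym_diff X Y) \<le> 3"
proof -
  have shape: "\<exists>P. Z = sym_diff U P \<and> finite P \<and> card P \<le> 2 \<and> (card P = 1 \<or> P \<subseteq> {i, j, k})"
    if Z: "Z \<in> nbhd_family n U \<union> K_family U i j k" for Z
  proof (cases "Z \<in> nbhd_family n U")
    case True
    then obtain m where "Z = sym_diff U {m}" by (rule nbhd_familyE)
    then show ?thesis by (intro exI[of _ "{m}"]) simp
  next
    case False
    then obtain P where P: "P \<in> {{}, {i, j}, {j, k}, {i, k}}" "Z = sym_diff U P"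
      using Z unfolding K_family_eq_image by blast
    have "finite P \<and> card P \<le> 2 \<and> P \<subseteq> {i, j, k}"
      using P(1) by (elim insertE) (auto simp: card_insert_if)
    then show ?thesis using P(2) by blast
  qed
  obtain P where P: "X = sym_diff U P" "finite P" "card P \<le> 2" "card P = 1 \<or> P \<subseteq> {i, j, k}"
    using shape[OF X] by blast
  obtain Q where Q: "Y = sym_diff U Q" "finite Q" "card Q \<le> 2" "card Q = 1 \<or> Q \<subseteq> {i, j, k}"
    using shape[OF Y] by blast
  have "sym_diff X Y = sym_diff P Q" unfolding P(1) Q(1) by (rule sym_diff_sym_diff_same_left)
  moreover have "card (sym_diff P Q) \<le> 3"
  proof (cases "P \<subseteq> {i, j, k} \<and> Q \<subseteq> {i, j, k}")
    case True
    then have "card (sym_diff P Q) \<le> card {i, j, k}" by (intro card_mono) auto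
    also have "\<dots> \<le> 3" by (simp add: card_insert_if)
    finally show ?thesis .
  next
    case False
    then have "card P = 1 \<or> card Q = 1" using P(4) Q(4) by blast
    then show ?thesis using card_sym_diff_le_add[OF P(2) Q(2)] P(3) Q(3) by linarith
  qed
  ultimately show ?thesis by simp
qed

lemma adjacent_nbhds_familyI:
  assumes mf: "maximal_family n F" and C: "C \<subseteq> {1..n}" and D: "D \<subseteq> {1..n}"
    and CD: "card (sym_diff C D) = 1" and F: "F \<subseteq> nbhd_family n C \<union> nbhd_family n D"
  shows "adjacent_nbhds_family n F"
proof -
  have "finite C" "finite D" using C D finite_subset by blast+
  then have "F = nbhd_family n C \<union> nbhd_family n D"
    using nbhd_family_subset_Pow[OF C] nbhd_family_subset_Pow[OF D] adjacent_nbhds_distance_le_3[OF _ _ CD]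
    by (intro maximal_family_eqI[OF mf F]) auto
  then show ?thesis unfolding adjacent_nbhds_family_def using C D CD by blast
qed

lemma nbhd_K_familyI:
  assumes mf: "maximal_family n F" and U: "U \<subseteq> {1..n}"
    and ijk: "i \<in> {1..n}" "j \<in> {1..n}" "k \<in> {1..n}" "i \<noteq> j" "j \<noteq> k" "i \<noteq> k"
    and F: "F \<subseteq> nbhd_family n U \<union> K_family U i j k"
  shows "nbhd_K_family n F"
proof -
  have "finite U" using U finite_subset by blast
  then have "F = nbhd_family n U \<union> K_family U i j k"
    using nbhd_family_subset_Pow[OF U] K_family_subset_Pow[OF U ijk(1-3)] nbhd_K_distance_le_3
    by (intro maximal_family_eqI[OF mf F]) auto
  then show ?thesis unfolding nbhd_K_family_def using U ijk by blast
qed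

lemma maximal_family_same_parity_distance_2:
  assumes mf: "maximal_family n F" and AB: "A \<in> F" "B \<in> F" "A \<noteq> B"
    and parity: "even (card A) = even (card B)"
  shows "card (sym_diff A B) = 2"
proof -
  have fin: "finite A" "finite B" using maximal_family_finite_member[OF mf] AB(1,2) by auto
  then have "even (card (sym_diff A B))" using even_card_sym_diff_iff parity by blast
  moreover have "sym_diff A B \<noteq> {}" using AB(3) by blast
  then have "card (sym_diff A B) \<noteq> 0" using fin by simp
  moreover have "card (sym_diff A B) \<le> 3" by (rule maximal_familyD(2)[OF mf AB(1,2)])
  ultimately show ?thesis by presburger
qed

lemma parity_class_in_nbhd_or_K:
  assumes mf: "maximal_family n F" and n: "1 \<le> n"
  shows "(\<exists>C. C \<subseteq> {1..n} \<and> {A \<in> F. even (card A) = b} \<subseteq> nbhd_family n C) \<or>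
    (\<exists>U i j k. U \<subseteq> {1..n} \<and> i \<in> {1..n} \<and> j \<in> {1..n} \<and> k \<in> {1..n} \<and>
       i \<noteq> j \<and> j \<noteq> k \<and> i \<noteq> k \<and> {A \<in> F. even (card A) = b} \<subseteq> K_family U i j k)"
  using maximal_familyD(1)[OF mf] n maximal_family_same_parity_distance_2[OF mf]
  by (intro distance_2_family_in_nbhd_or_K) auto

lemma maximal_family_structured_if_centre_member:
  assumes mf: "maximal_family n F" and n: "1 \<le> n" and C: "C \<in> F"
    and other: "{A \<in> F. even (card A) \<noteq> even (card C)} \<subseteq> nbhd_family n C"
  shows "adjacent_nbhds_family n F \<or> nbhd_K_family n F"
proof -
  have F: "F \<subseteq> {A \<in> F. even (card A) = even (card C)} \<union> nbhd_family n C"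
    using other by blast
  have C_sub: "C \<subseteq> {1..n}" using maximal_familyD(1)[OF mf] C by blast
  from parity_class_in_nbhd_or_K[OF mf n, of "even (card C)"] show ?thesis
  proof (elim disjE exE conjE)
    fix D assume D: "D \<subseteq> {1..n}" "{A \<in> F. even (card A) = even (card C)} \<subseteq> nbhd_family n D"
    then have "C \<in> nbhd_family n D" using C by blast
    then obtain d where "C = sym_diff D {d}" by (rule nbhd_familyE)
    then have "sym_diff C D = {d}" by blast
    then show ?thesis
      using adjacent_nbhds_familyI[OF mf C_sub D(1)] F D(2) by auto
  next
    fix U i j k
    assume ijk: "i \<in> {1..n}" "j \<in> {1..n}" "k \<in> {1..n}" "i \<noteq> j" "j \<noteq> k" "i \<noteq> k"
      and K: "{A \<in> F. even (card A) = even (card C)} \<subseteq> K_family U i j k"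
    have "K_family C i j k = K_family U i j k"
      using K C ijk(4-6) by (intro K_family_recenter) auto
    then show ?thesis
      using nbhd_K_familyI[OF mf C_sub ijk] F K by auto
  qed
qed

lemma card_K_family_le: "card (K_family U i j k) \<le> 4"
  unfolding K_family_def by (simp add: card_insert_if)

lemma parity_class_card_le_4:
  assumes mf: "maximal_family n F" and n: "1 \<le> n"
  shows "adjacent_nbhds_family n F \<or> nbhd_K_family n F \<or> card {A \<in> F. even (card A) = b} \<le> 4"
proof -
  let ?Q = "{A \<in> F. even (card A) = b}"
  have finQ: "finite ?Q" using maximal_family_finite[OF mf] by simp
  from parity_class_in_nbhd_or_K[OF mf n, of b] show ?thesis
  proof (elim disjE exE conjE)
    fix C assume C: "C \<subseteq> {1..n}" and Q: "?Q \<subseteq> nbhd_family n C"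
    show ?thesis
    proof (cases "C \<in> F \<and> ?Q \<noteq> {}")
      case True
      then obtain A where A: "A \<in> ?Q" by blast
      then have "A \<in> nbhd_family n C" using Q by blast
      then obtain i where "A = sym_diff C {i}" by (rule nbhd_familyE)
      moreover note A
      moreover have "finite C" using C finite_subset by blast
      ultimately have "b \<noteq> even (card C)" using even_card_sym_diff_singleton_iff by auto
      then have "{A \<in> F. even (card A) \<noteq> even (card C)} = ?Q" by blast
      then show ?thesis
        using maximal_family_structured_if_centre_member[OF mf n] True Q by auto
    next
      case False
      then consider "C \<notin> F" | "?Q = {}" by blast
      then show ?thesis
      proof cases
        case 1
        have "?Q \<subseteq> F" by blast
        then show ?thesis using card_le_4_if_subset_nbhd_of_nonmember[OF mf C 1 _ Q] by blast
      next
        case 2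
        then show ?thesis by (simp only: card.empty) simp
      qed
    qed
  next
    fix U i j k assume "?Q \<subseteq> K_family U i j k"
    then have "card ?Q \<le> card (K_family U i j k)"
      by (intro card_mono) (simp_all add: K_family_def)
    then show ?thesis using card_K_family_le[of U i j k] by simp
  qed
qed

lemma maximal_family_structured_or_card_le_8:
  assumes mf: "maximal_family n F" and n: "1 \<le> n"
  shows "adjacent_nbhds_family n F \<or> nbhd_K_family n F \<or> card F \<le> 8"
proof -
  have "F = {A \<in> F. even (card A) = True} \<union> {A \<in> F. even (card A) = False}" by blast
  then have "card F = card {A \<in> F. even (card A) = True} + card {A \<in> F. even (card A) = False}"
    using maximal_family_finite[OF mf] by (metis (no_types, lifting) card_Un_disjoint disjoint_iff finite_Un mem_Collect_eq)
  then show ?thesis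
    using parity_class_card_le_4[OF mf n, of True] parity_class_card_le_4[OF mf n, of False] by linarith
qed

lemma card_nbhd_family: "card (nbhd_family n C) = n"
proof -
  have "inj_on (\<lambda>i. sym_diff C {i}) {1..n}"
  proof (rule inj_onI)
    fix i j assume "sym_diff C {i} = sym_diff C {j}"
    then have "{i} = {j}" by (rule injD[OF inj_sym_diff])
    then show "i = j" by simp
  qed
  then show ?thesis unfolding nbhd_family_def by (simp add: card_image)
qed

lemma card_adjacent_nbhds:
  assumes "card (sym_diff C D) = 1"
  shows "card (nbhd_family n C \<union> nbhd_family n D) = 2 * n"
proof -
  have "nbhd_family n C \<inter> nbhd_family n D = {}"
  proof (rule ccontr)
    assume "nbhd_family n C \<inter> nbhd_family n D \<noteq> {}"
    then obtain X where "X \<in> nbhd_family n C" "X \<in> nbhd_family n D" by blast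
    then obtain a b where "X = sym_diff C {a}" "X = sym_diff D {b}"
      by (metis nbhd_familyE)
    then have "sym_diff C D = sym_diff {a} {b}" by blast
    moreover have "card (sym_diff {a} {b}) \<noteq> 1"
      by (cases "a = b") (simp_all add: insert_Diff_if)
    ultimately show False using assms by simp
  qed
  moreover have "finite (nbhd_family n C)" "finite (nbhd_family n D)"
    by (simp_all add: nbhd_family_def)
  ultimately show ?thesis by (simp add: card_Un_disjoint card_nbhd_family)
qed

lemma card_nbhd_K:
  assumes "i \<noteq> j" "j \<noteq> k" "i \<noteq> k"
  shows "card (nbhd_family n U \<union> K_family U i j k) = n + 4"
proof -
  let ?V = "{{}, {i, j}, {j, k}, {i, k}} :: nat set set"
  have inj: "inj_on (\<lambda>P. sym_diff U P) A" for A
    using inj_sym_diff by (rule inj_on_subset) simp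
  have "card (K_family U i j k) = card ?V"
    unfolding K_family_eq_image by (rule card_image[OF inj])
  also have "card ?V = 4" using assms by (simp add: doubleton_eq_iff)
  finally have "card (K_family U i j k) = 4" .
  moreover have "nbhd_family n U \<inter> K_family U i j k = {}"
  proof (rule ccontr)
    assume "nbhd_family n U \<inter> K_family U i j k \<noteq> {}"
    then obtain X where X: "X \<in> nbhd_family n U" "X \<in> K_family U i j k" by blast
    from X(1) obtain m where m: "X = sym_diff U {m}" by (rule nbhd_familyE)
    from X(2) obtain P where P: "P \<in> ?V" "X = sym_diff U P"
      unfolding K_family_eq_image by blast
    from m[symmetric] P(2) have "sym_diff U {m} = sym_diff U P" by (rule trans)
    then have "{m} = P" by (rule injD[OF inj_sym_diff])
    then have "{m} \<in> ?V" using P(1) by simp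
    then show False using assms by (auto simp: doubleton_eq_iff)
  qed
  moreover have "finite (nbhd_family n U)" "finite (K_family U i j k)"
    by (simp_all add: nbhd_family_def K_family_def)
  ultimately show ?thesis by (simp add: card_Un_disjoint card_nbhd_family)
qed

definition diff_coords :: "nat \<Rightarrow> (nat \<Rightarrow> bool) \<Rightarrow> (nat \<Rightarrow> bool) \<Rightarrow> nat set" where
  "diff_coords n a x = {i \<in> {1..n}. x i \<noteq> a i}"

lemma flip_flip: "flip (flip u A) B = flip u (sym_diff A B)"
  by (rule ext) (auto simp: flip_def)

lemma inj_flip: "inj (flip a)"
proof (rule injI)
  fix A B assume "flip a A = flip a B"
  then have "\<And>i. (i \<in> A) = (i \<in> B)" unfolding flip_def by (metis (full_types))
  then show "A = B" by blast
qed

lemma hcube_undefined: "x \<in> hcube n \<Longrightarrow> i \<notin> {1..n} \<Longrightarrow> x i = undefined"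
  unfolding hcube_def by (rule PiE_arb)

lemma flip_in_hcube: "a \<in> hcube n \<Longrightarrow> A \<subseteq> {1..n} \<Longrightarrow> flip a A \<in> hcube n"
  unfolding hcube_def by (auto simp: PiE_iff extensional_def flip_def dest: PiE_arb)

lemma flip_diff_coords: "a \<in> hcube n \<Longrightarrow> x \<in> hcube n \<Longrightarrow> flip a (diff_coords n a x) = x"
  by (rule ext) (auto simp: flip_def diff_coords_def hcube_undefined)

lemma diff_coords_flip: "A \<subseteq> {1..n} \<Longrightarrow> diff_coords n a (flip a A) = A"
  by (auto simp: diff_coords_def flip_def)

lemma hdist_eq_card_sym_diff: "hdist n x y = card (sym_diff (diff_coords n a x) (diff_coords n a y))"
proof -
  have "{i \<in> {1..n}. x i \<noteq> y i} = sym_diff (diff_coords n a x) (diff_coords n a y)"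
    by (auto simp: diff_coords_def)
  then show ?thesis by (simp add: hdist_def)
qed

lemma hdist_flip: "A \<subseteq> {1..n} \<Longrightarrow> B \<subseteq> {1..n} \<Longrightarrow> hdist n (flip a A) (flip a B) = card (sym_diff A B)"
  by (simp add: hdist_eq_card_sym_diff[of n _ _ a] diff_coords_flip)

lemma nbhd_flip: "nbhd n (flip a C) = flip a ` nbhd_family n C"
  unfolding nbhd_def nbhd_family_def by (auto simp: flip_flip)

lemma Kset_flip: "Kset (flip a U) i j k = flip a ` K_family U i j k"
  unfolding Kset_def K_family_def by (simp add: flip_flip)

lemma maximal_family_diff_coords:
  assumes a: "a \<in> hcube n" and \<sigma>: "maximal_simplex n \<sigma>"
  shows "maximal_family n (diff_coords n a ` \<sigma>)"
  unfolding maximal_family_def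
proof (intro conjI allI impI ballI)
  let ?F = "diff_coords n a ` \<sigma>"
  have close: "hdist n x y \<le> 3" if "x \<in> \<sigma>" "y \<in> \<sigma>" for x y
    using \<sigma> that unfolding maximal_simplex_def simplices_def by blast
  show "?F \<subseteq> Pow {1..n}" by (auto simp: diff_coords_def)
  show "card (sym_diff A B) \<le> 3" if "A \<in> ?F" "B \<in> ?F" for A B
    using that close by (auto simp: hdist_eq_card_sym_diff[of n _ _ a])
  fix A assume A: "A \<subseteq> {1..n}" and near: "\<forall>B\<in>?F. card (sym_diff A B) \<le> 3"
  let ?z = "flip a A"
  have close_A: "card (sym_diff P Q) \<le> 3" if "P \<in> insert A ?F" "Q \<in> insert A ?F" for P Q
    using that near close by (auto simp: hdist_eq_card_sym_diff[of n _ _ a] Un_commute)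
  have "hdist n x y \<le> 3" if "x \<in> insert ?z \<sigma>" "y \<in> insert ?z \<sigma>" for x y
    unfolding hdist_eq_card_sym_diff[of n x y a]
    by (rule close_A) (use that diff_coords_flip[OF A] in auto)
  moreover have "insert ?z \<sigma> \<subseteq> hcube n"
    using \<sigma> flip_in_hcube[OF a A] unfolding maximal_simplex_def simplices_def by blast
  ultimately have "insert ?z \<sigma> \<in> simplices n" unfolding simplices_def by blast
  then have "?z \<in> \<sigma>" using \<sigma> unfolding maximal_simplex_def by blast
  then show "A \<in> ?F" using diff_coords_flip[OF A] by (metis imageI)
qed

lemma adjacent_nbhds_family_flip:
  assumes a: "a \<in> hcube n" and "adjacent_nbhds_family n F"
  shows "card F = 2 * n \<and> (\<exists>v w. hadj n v w \<and> flip a ` F = nbhd n v \<union> nbhd n w)"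
proof -
  obtain C D where C: "C \<subseteq> {1..n}" and D: "D \<subseteq> {1..n}" and CD: "card (sym_diff C D) = 1"
    and F: "F = nbhd_family n C \<union> nbhd_family n D"
    using assms(2) unfolding adjacent_nbhds_family_def by blast
  have "hadj n (flip a C) (flip a D)"
    unfolding hadj_def using flip_in_hcube[OF a] C D CD hdist_flip by simp
  moreover have "flip a ` F = nbhd n (flip a C) \<union> nbhd n (flip a D)"
    unfolding F nbhd_flip by (rule image_Un)
  ultimately show ?thesis using card_adjacent_nbhds[OF CD] F by blast
qed

lemma nbhd_K_family_flip:
  assumes a: "a \<in> hcube n" and "nbhd_K_family n F"
  shows "card F = n + 4 \<and>
    (\<exists>u i j k. u \<in> hcube n \<and> i \<in> {1..n} \<and> j \<in> {1..n} \<and> k \<in> {1..n} \<and>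
       i \<noteq> j \<and> j \<noteq> k \<and> i \<noteq> k \<and> flip a ` F = nbhd n u \<union> Kset u i j k)"
proof -
  obtain U i j k where U: "U \<subseteq> {1..n}"
    and ijk: "i \<in> {1..n}" "j \<in> {1..n}" "k \<in> {1..n}" "i \<noteq> j" "j \<noteq> k" "i \<noteq> k"
    and F: "F = nbhd_family n U \<union> K_family U i j k"
    using assms(2) unfolding nbhd_K_family_def by blast
  have "flip a ` F = nbhd n (flip a U) \<union> Kset (flip a U) i j k"
    unfolding F nbhd_flip Kset_flip by (rule image_Un)
  then show ?thesis
    using card_nbhd_K[OF ijk(4-6)] F flip_in_hcube[OF a U] ijk by blast
qed

theorem mainTheorem12:
  fixes n :: nat and \<sigma> :: "(nat \<Rightarrow> bool) set"
  assumes "n \<ge> 4" and "maximal_simplex n \<sigma>"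
  shows "sdim \<sigma> \<in> {7, int n + 3, 2 * int n - 1} \<and>
    (sdim \<sigma> \<noteq> 7 \<longrightarrow>
      (\<exists>v w. hadj n v w \<and> \<sigma> = nbhd n v \<union> nbhd n w) \<or>
      (\<exists>u i j k. u \<in> hcube n \<and> i \<in> {1..n} \<and> j \<in> {1..n} \<and> k \<in> {1..n} \<and>
         i \<noteq> j \<and> j \<noteq> k \<and> i \<noteq> k \<and> \<sigma> = nbhd n u \<union> Kset u i j k))"
proof -
  obtain a where "a \<in> \<sigma>" and \<sigma>_hcube: "\<sigma> \<subseteq> hcube n"
    using assms(2) unfolding maximal_simplex_def simplices_def by blast
  then have a: "a \<in> hcube n" by blast
  define F where "F = diff_coords n a ` \<sigma>"
  have mf: "maximal_family n F"
    unfolding F_def by (rule maximal_family_diff_coords[OF a assms(2)])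
  have "flip a ` F = (\<lambda>x. x) ` \<sigma>"
    unfolding F_def image_image using flip_diff_coords[OF a] \<sigma>_hcube by (intro image_cong) auto
  then have \<sigma>: "\<sigma> = flip a ` F" by simp
  then have dim: "sdim \<sigma> = int (card F) - 1"
    unfolding sdim_def by (simp add: card_image[OF inj_on_subset[OF inj_flip subset_UNIV]])
  have "8 \<le> card F" using card_maximal_family_ge_8[OF mf] assms(1) by simp
  from maximal_family_structured_or_card_le_8[OF mf] assms(1)
  consider "adjacent_nbhds_family n F" | "nbhd_K_family n F" | "card F \<le> 8" by fastforce
  then show ?thesis
  proof cases
    case 1
    then show ?thesis using adjacent_nbhds_family_flip[OF a] dim \<sigma> by auto
  next
    case 2
    then show ?thesis using nbhd_K_family_flip[OF a] dim \<sigma> by auto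
  next
    case 3
    then show ?thesis using dim \<open>8 \<le> card F\<close> by simp
  qed
qed

end
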